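(* Let $u\in\mathbb Z$, $\ell,d_1,\dots,d_\ell\in\mathbb N$ and $\phi(\tau,z)=\eta(\tau)^u\prod_{i=1}^\ell\vartheta(\tau,d_iz)$. Then, regarding $\phi$ and $\frac{\phi(2\tau,2z)}{\phi(\tau,z)}$ as formal series in $R(24)$, $$\nu_J\Bigl(\frac{\phi(2\tau,2z)}{\phi(\tau,z)}\Bigr)=\nu_J(\phi).$$
   Context: $q=e^{2\pi i\tau}$, $\zeta=e^{2\pi iz}$; $\eta(\tau)=q^{1/24}\prod_{n\ge1}(1-q^n)$ and $\vartheta(\tau,z)=q^{1/8}(\zeta^{1/2}-\zeta^{-1/2})\prod_{j\ge1}(1-q^j\zeta)(1-q^j\zeta^{-1})(1-q^j)$. With $v=\frac{u+3\ell}{24}$ and $k=\frac{\ell+u}2$ one has the product expansions $\phi=q^v\prod_{j}(1-q^j)^{2k}\prod_i(\zeta^{d_i/2}-\zeta^{-d_i/2})\prod_{i,j}(1-q^j\zeta^{d_i})(1-q^j\zeta^{-d_i})$ and $\frac{\phi(2\tau,2z)}{\phi(\tau,z)}=q^v\prod_{j}(1+q^j)^{2k}\prod_i(\zeta^{d_i/2}+\zeta^{-d_i/2})\prod_{i,j}(1+q^j\zeta^{d_i})(1+q^j\zeta^{-d_i})$, which are formal series in $R(24)$. Here $R(N)=\mathbb C[\zeta^{1/N},\zeta^{-1/N}]((q^{1/N}))$ is the ring of formal series $f=\sum_{n,r\in\frac1N\mathbb Z}c(n,r)q^n\zeta^r$ with finitely many $r$ for each $n$ and $n$ bounded below on $\operatorname{supp}(f)=\{(n,r):c(n,r)\neq0\}$.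 For $P\subseteq\mathbb R^2$, $\operatorname{conv}(P;\vec A)=\operatorname{conv}(P)+[0,\infty)\times\{0\}$ and $\nu_J(f)=\operatorname{Closure}_{\mathbb R^2}(\operatorname{conv}(\operatorname{supp}(f);\vec A))$. *)

theory Defs
  imports "HOL-Analysis.Analysis" "HOL-Computational_Algebra.Formal_Laurent_Series"
begin

text \<open>Formal series are modelled in the field K of Laurent series in Q = q^(1/24) whose
coefficients are Laurent series in W = zeta^(1/24).  The element
sum c(a,b) Q^a W^b corresponds to sum c(a,b) q^(a/24) zeta^(b/24); R(24) sits inside K.\<close>

type_synonym K = "complex fls fls"

definition Qv :: K where "Qv = fls_X"
definition Wv :: K where "Wv = fls_const fls_X"

definition is_infprod :: "(nat \<Rightarrow> K) \<Rightarrow> K \<Rightarrow> bool" where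
  "is_infprod f P \<longleftrightarrow>
     (\<forall>n::int. \<forall>\<^sub>F N in sequentially. fls_nth (\<Prod>j\<in>{1..N}. f j) n = fls_nth P n)"

definition infprod :: "(nat \<Rightarrow> K) \<Rightarrow> K" where
  "infprod f = (THE P. is_infprod f P)"

text \<open>eta and theta(tau, d z), written in terms of the variables X = q^(1/24), Y = zeta^(1/24);
substituting (X,Y) := (Qv,Wv) gives eta(tau), theta(tau,d z), and
(X,Y) := (Qv^2,Wv^2) gives eta(2 tau), theta(2 tau, 2 d z).\<close>
definition eta_at :: "K \<Rightarrow> K \<Rightarrow> K" where
  "eta_at X Y = X * infprod (\<lambda>n. 1 - X ^ (24 * n))"

definition theta_at :: "K \<Rightarrow> K \<Rightarrow> nat \<Rightarrow> K" where
  "theta_at X Y d = X ^ 3 * (Y powi (12 * int d) - Y powi (- 12 * int d)) *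
     infprod (\<lambda>j. (1 - X ^ (24 * j) * Y powi (24 * int d)) *
                  (1 - X ^ (24 * j) * Y powi (- 24 * int d)) * (1 - X ^ (24 * j)))"

definition phi_at :: "K \<Rightarrow> K \<Rightarrow> int \<Rightarrow> nat list \<Rightarrow> K" where
  "phi_at X Y u ds = eta_at X Y powi u * (\<Prod>d\<leftarrow>ds. theta_at X Y d)"

definition phi :: "int \<Rightarrow> nat list \<Rightarrow> K" where
  "phi u ds = phi_at Qv Wv u ds"

definition phi2 :: "int \<Rightarrow> nat list \<Rightarrow> K" where
  "phi2 u ds = phi_at (Qv ^ 2) (Wv ^ 2) u ds"

definition fsupp :: "K \<Rightarrow> (real \<times> real) set" where
  "fsupp f = {(real_of_int a / 24, real_of_int b / 24) | a b. fls_nth (fls_nth f a) b \<noteq> 0}"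

definition conv_A :: "(real \<times> real) set \<Rightarrow> (real \<times> real) set" where
  "conv_A P = {x + (t, 0) | x t. x \<in> convex hull P \<and> t \<ge> 0}"

definition nu_J :: "K \<Rightarrow> (real \<times> real) set" where
  "nu_J f = closure (conv_A (fsupp f))"

end

(*
  Order the exponents (a, b) of q^(a/24) zeta^(b/24) by the weight a + l b for an irrational
  slope l; then distinct exponents have distinct weights, every factor of phi has a unique
  l-minimal ("initial") exponent, and initial exponents add under multiplication.  The
  quotient phi(2 tau, 2 z) / phi(tau, z) is the product of the same factors with the signs -
  turned into +, and changing the sign of a coefficient does not change an initial exponent.
  So phi and the quotient have the same initial exponent for every irrational slope: their
  supports have the same lower supporting lines of irrational slope.  A closed convex set
  that is stable under (n, r) -> (n + t, r), t >= 0, and lies to the right of a vertical line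
  is cut out by such lines, hence the two Newton polygons coincide.
*)
theory Submission
  imports Defs
begin

unbundle fps_syntax

section \<open>Coefficients and initial exponents\<close>

definition coeff2 :: "K \<Rightarrow> int \<times> int \<Rightarrow> complex" where
  "coeff2 f p = f $$ fst p $$ snd p"

lemma coeff2_add: "coeff2 (f + g) p = coeff2 f p + coeff2 g p"
  by (simp add: coeff2_def)

lemma coeff2_0: "coeff2 0 p = 0"
  by (simp add: coeff2_def)

lemma fls_times_nth_superset:
  fixes f g :: "'a::comm_ring_1 fls"
  assumes "finite A" "\<And>i. f $$ i * g $$ (n - i) \<noteq> 0 \<Longrightarrow> i \<in> A"
  shows "(f * g) $$ n = (\<Sum>i\<in>A. f $$ i * g $$ (n - i))"
proof -
  let ?B = "{fls_subdegree f..n - fls_subdegree g}"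
  have vanish: "f $$ i * g $$ (n - i) = 0" if "i \<notin> ?B" for i
  proof (rule ccontr)
    assume "f $$ i * g $$ (n - i) \<noteq> 0"
    then have "fls_subdegree f \<le> i" "fls_subdegree g \<le> n - i"
      by (auto intro: fls_subdegree_leI)
    with that show False by auto
  qed
  have "(f * g) $$ n = (\<Sum>i\<in>?B. f $$ i * g $$ (n - i))"
    by (rule fls_times_nth(2))
  also have "\<dots> = (\<Sum>i\<in>?B \<inter> A. f $$ i * g $$ (n - i))"
    by (rule sum.mono_neutral_right) (use assms in auto)
  also have "\<dots> = (\<Sum>i\<in>A. f $$ i * g $$ (n - i))"
    by (rule sum.mono_neutral_left) (use assms(1) in \<open>auto intro!: vanish\<close>)
  finally show ?thesis .
qed

lemma coeff2_mult:
  assumes "finite A" "\<And>y. coeff2 f y * coeff2 g (x - y) \<noteq> 0 \<Longrightarrow> y \<in> A"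
  shows "coeff2 (f * g) x = (\<Sum>y\<in>A. coeff2 f y * coeff2 g (x - y))"
proof -
  obtain x1 x2 where x: "x = (x1, x2)" by (cases x)
  let ?B1 = "{fls_subdegree f..x1 - fls_subdegree g}"
  let ?B2 = "\<lambda>i. {fls_subdegree (f $$ i)..x2 - fls_subdegree (g $$ (x1 - i))}"
  let ?T = "\<lambda>y. coeff2 f y * coeff2 g (x - y)"
  have vanish: "?T y = 0" if "y \<notin> Sigma ?B1 ?B2" for y
  proof (rule ccontr)
    obtain i j where y: "y = (i, j)" by (cases y)
    assume "?T y \<noteq> 0"
    then have nz: "f $$ i $$ j \<noteq> 0" "g $$ (x1 - i) $$ (x2 - j) \<noteq> 0"
      by (auto simp: coeff2_def x y)
    then have "f $$ i \<noteq> 0" "g $$ (x1 - i) \<noteq> 0" by auto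
    then have "fls_subdegree f \<le> i" "fls_subdegree g \<le> x1 - i"
      by (auto intro: fls_subdegree_leI)
    moreover have "fls_subdegree (f $$ i) \<le> j" "fls_subdegree (g $$ (x1 - i)) \<le> x2 - j"
      using nz by (auto intro: fls_subdegree_leI)
    ultimately show False using that y by auto
  qed
  have "coeff2 (f * g) x = (\<Sum>i\<in>?B1. f $$ i * g $$ (x1 - i)) $$ x2"
    unfolding coeff2_def x by (simp add: fls_times_nth(2))
  also have "\<dots> = (\<Sum>i\<in>?B1. \<Sum>j\<in>?B2 i. ?T (i, j))"
    unfolding fls_nth_sum coeff2_def x by (intro sum.cong refl) (simp add: fls_times_nth(2))
  also have "\<dots> = (\<Sum>y\<in>Sigma ?B1 ?B2. ?T y)"
    by (subst sum.Sigma) (auto simp: case_prod_unfold)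
  also have "\<dots> = (\<Sum>y\<in>Sigma ?B1 ?B2 \<inter> A. ?T y)"
    by (rule sum.mono_neutral_right) (use assms in auto)
  also have "\<dots> = (\<Sum>y\<in>A. ?T y)"
    using assms(1) vanish by (intro sum.mono_neutral_left) blast+
  finally show ?thesis .
qed

lemma coeff2_mult_nonzeroE:
  assumes "coeff2 (f * g) x \<noteq> 0"
  obtains y where "coeff2 f y \<noteq> 0" "coeff2 g (x - y) \<noteq> 0"
  using assms coeff2_mult[of "{}" f g x] that by fastforce

definition weight :: "real \<Rightarrow> int \<times> int \<Rightarrow> real" where
  "weight l p = real_of_int (fst p) + l * real_of_int (snd p)"

lemma weight_add: "weight l (p + q) = weight l p + weight l q"
  by (simp add: weight_def algebra_simps)

lemma weight_diff: "weight l (p - q) = weight l p - weight l q"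
  by (simp add: weight_def algebra_simps)

lemma weight_inj:
  assumes "l \<notin> \<rat>" "weight l p = weight l q"
  shows "p = q"
proof (cases "snd p = snd q")
  case True
  with assms(2) show ?thesis by (simp add: weight_def prod_eq_iff)
next
  case False
  from assms(2) have "l * (of_int (snd p) - of_int (snd q)) = of_int (fst q) - of_int (fst p)"
    by (simp add: weight_def algebra_simps)
  then have "l = (of_int (fst q) - of_int (fst p)) / (of_int (snd p) - of_int (snd q))"
    using False by (simp add: field_simps)
  also have "\<dots> \<in> \<rat>" by (intro Rats_divide Rats_diff) auto
  finally show ?thesis using assms(1) by simp
qed

definition initial_exp :: "real \<Rightarrow> K \<Rightarrow> int \<times> int \<Rightarrow> bool" where
  "initial_exp l f p \<longleftrightarrow> coeff2 f p \<noteq> 0 \<and> (\<forall>y. coeff2 f y \<noteq> 0 \<longrightarrow> weight l p \<le> weight l y)"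

lemma initial_exp_unique:
  "l \<notin> \<rat> \<Longrightarrow> initial_exp l f p \<Longrightarrow> initial_exp l f q \<Longrightarrow> p = q"
  unfolding initial_exp_def by (meson antisym weight_inj)

lemma initial_exp_nonzero: "initial_exp l f p \<Longrightarrow> f \<noteq> 0"
  by (auto simp: initial_exp_def coeff2_0)

lemma initial_exp_mult:
  assumes l: "l \<notin> \<rat>" and f: "initial_exp l f p" and g: "initial_exp l g q"
  shows "initial_exp l (f * g) (p + q)" "coeff2 (f * g) (p + q) = coeff2 f p * coeff2 g q"
proof -
  have "coeff2 (f * g) (p + q) = (\<Sum>y\<in>{p}. coeff2 f y * coeff2 g (p + q - y))"
  proof (rule coeff2_mult)
    fix y assume "coeff2 f y * coeff2 g (p + q - y) \<noteq> 0"
    then have "coeff2 f y \<noteq> 0" "coeff2 g (p + q - y) \<noteq> 0" by auto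
    then have "weight l p \<le> weight l y" "weight l q \<le> weight l (p + q - y)"
      using f g unfolding initial_exp_def by blast+
    then have "weight l y = weight l p" by (simp add: weight_add weight_diff)
    then show "y \<in> {p}" using weight_inj[OF l] by auto
  qed simp
  then show eq: "coeff2 (f * g) (p + q) = coeff2 f p * coeff2 g q" by simp
  show "initial_exp l (f * g) (p + q)"
    unfolding initial_exp_def
  proof safe
    show "coeff2 (f * g) (p + q) = 0 \<Longrightarrow> False"
      using eq f g by (simp add: initial_exp_def)
  next
    fix y assume "coeff2 (f * g) y \<noteq> 0"
    then obtain z where "coeff2 f z \<noteq> 0" "coeff2 g (y - z) \<noteq> 0"
      by (rule coeff2_mult_nonzeroE)
    then have "weight l p \<le> weight l z" "weight l q \<le> weight l (y - z)"
      using f g unfolding initial_exp_def by blast+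
    then show "weight l (p + q) \<le> weight l y" by (simp add: weight_add weight_diff)
  qed
qed

definition monom2 :: "int \<times> int \<Rightarrow> K" where
  "monom2 p = Qv powi fst p * Wv powi snd p"

abbreviation const2 :: "complex \<Rightarrow> K" where
  "const2 c \<equiv> fls_const (fls_const c)"

lemma monom2_nth: "monom2 (a, b) $$ k = (if k = a then fls_shift (-b) 1 else 0)"
proof -
  have "Wv powi b = fls_const (fls_shift (-b) 1)"
    by (simp add: Wv_def flip: fls_const_power_int)
  then show ?thesis by (simp add: monom2_def Qv_def)
qed

lemma coeff2_monom2: "coeff2 (monom2 p) y = (if y = p then 1 else 0)"
  by (cases p, cases y) (auto simp: coeff2_def monom2_nth)

lemma coeff2_const2_mult: "coeff2 (const2 c * f) y = c * coeff2 f y"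
  by (simp add: coeff2_def)

lemma monom2_0: "monom2 0 = 1"
  by (simp add: monom2_def zero_prod_def)

lemma coeff2_1: "coeff2 1 y = (if y = 0 then 1 else 0)"
  using coeff2_monom2[of 0 y] by (simp add: monom2_0)

lemma monom2_mult: "monom2 p * monom2 q = monom2 (p + q)"
proof -
  have "Qv \<noteq> 0" "Wv \<noteq> 0" by (simp_all add: Qv_def Wv_def)
  then show ?thesis
    by (cases p, cases q) (simp add: monom2_def power_int_add mult_ac)
qed

lemma Qv_power: "Qv ^ k = monom2 (int k, 0)"
  by (simp add: monom2_def)

lemma Wv_powi: "Wv powi b = monom2 (0, b)"
  by (simp add: monom2_def)

lemma Qv2_power_Wv2_powi: "(Qv ^ 2) ^ k * (Wv ^ 2) powi b = monom2 (2 * int k, 2 * b)"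
proof -
  have "(Qv ^ 2) ^ k = Qv ^ (2 * k)" by (simp add: power_mult)
  moreover have "(Wv ^ 2) powi b = Wv powi (2 * b)"
    by (metis power_int_mult power_int_of_nat of_nat_numeral)
  ultimately show ?thesis
    by (simp add: Qv_power Wv_powi monom2_mult)
qed

lemma initial_exp_monom2: "initial_exp l (monom2 p) p"
  by (auto simp: initial_exp_def coeff2_monom2 split: if_splits)

lemma initial_exp_one: "initial_exp l 1 0"
  using initial_exp_monom2[of l 0] by (simp add: monom2_0)

lemma initial_exp_prod:
  assumes l: "l \<notin> \<rat>" and "finite S" "\<forall>j\<in>S. initial_exp l (F j) (e j)"
  shows "initial_exp l (\<Prod>j\<in>S. F j) (\<Sum>j\<in>S. e j)"
  using assms(2,3)
proof (induction S rule: finite_induct)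
  case empty
  then show ?case by (simp add: initial_exp_one)
next
  case (insert x S)
  then show ?case using initial_exp_mult(1)[OF l] by simp
qed

lemma initial_exp_prod_list:
  assumes l: "l \<notin> \<rat>" and "\<forall>d\<in>set ds. initial_exp l (F d) (e d)"
  shows "initial_exp l (\<Prod>d\<leftarrow>ds. F d) (\<Sum>d\<leftarrow>ds. e d)"
  using assms(2)
proof (induction ds)
  case Nil
  then show ?case by (simp add: initial_exp_one)
next
  case (Cons a ds)
  then show ?case using initial_exp_mult[OF l, of "F a" "e a"] by simp
qed

definition lower_end :: "real \<Rightarrow> int \<times> int \<Rightarrow> int \<times> int \<Rightarrow> int \<times> int" where
  "lower_end l p q = (if weight l p < weight l q then p else q)"

lemma initial_exp_binomial:
  assumes l: "l \<notin> \<rat>" and "p \<noteq> q" "c \<noteq> 0"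
  shows "initial_exp l (monom2 p + const2 c * monom2 q) (lower_end l p q)"
proof -
  have "weight l p \<noteq> weight l q" using weight_inj[OF l] assms(2) by blast
  then show ?thesis
    using assms(2,3)
    by (auto simp: initial_exp_def lower_end_def coeff2_add coeff2_const2_mult coeff2_monom2)
qed

lemma initial_exp_one_plus_monom2:
  assumes "l \<notin> \<rat>" "m \<noteq> 0" "c \<noteq> 0"
  shows "initial_exp l (1 + const2 c * monom2 m) (lower_end l 0 m)"
  using initial_exp_binomial[of l 0 m c] assms by (simp add: monom2_0)

definition initially_one :: "real \<Rightarrow> K \<Rightarrow> bool" where
  "initially_one l f \<longleftrightarrow> initial_exp l f 0 \<and> coeff2 f 0 = 1"

lemma initially_one_mult:
  assumes "l \<notin> \<rat>" "initially_one l f" "initially_one l g"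
  shows "initially_one l (f * g)"
  using initial_exp_mult[of l f 0 g 0] assms by (simp add: initially_one_def)

lemma initially_one_one_plus_monom2:
  assumes "weight l m > 0"
  shows "initially_one l (1 + const2 c * monom2 m)"
proof -
  have "m \<noteq> 0" using assms by (auto simp: weight_def)
  then have "coeff2 (1 + const2 c * monom2 m) 0 = 1"
    by (simp add: coeff2_add coeff2_const2_mult coeff2_monom2 coeff2_1)
  moreover have "weight l 0 \<le> weight l y" if "coeff2 (1 + const2 c * monom2 m) y \<noteq> 0" for y
    using that assms by (auto simp: coeff2_add coeff2_const2_mult coeff2_monom2 coeff2_1
        weight_def split: if_splits)
  ultimately show ?thesis
    by (simp add: initially_one_def initial_exp_def)
qed

section \<open>Formal infinite products\<close>

definition vanishes_below :: "int \<Rightarrow> 'a::zero fls \<Rightarrow> bool" where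
  "vanishes_below m f \<longleftrightarrow> (\<forall>k<m. f $$ k = 0)"

lemma vanishes_below_mono: "vanishes_below m f \<Longrightarrow> n \<le> m \<Longrightarrow> vanishes_below n f"
  by (simp add: vanishes_below_def)

lemma vanishes_below_add:
  "vanishes_below m f \<Longrightarrow> vanishes_below m g \<Longrightarrow> vanishes_below m (f + g)"
  by (simp add: vanishes_below_def)

lemma vanishes_below_mult:
  fixes f g :: "'a::comm_ring_1 fls"
  assumes "vanishes_below m f" "vanishes_below n g"
  shows "vanishes_below (m + n) (f * g)"
proof (cases "f = 0 \<or> g = 0")
  case True
  then show ?thesis by (auto simp: vanishes_below_def)
next
  case False
  then have "m \<le> fls_subdegree f" "n \<le> fls_subdegree g"
    using assms by (auto simp: vanishes_below_def intro: fls_subdegree_geI)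
  then show ?thesis by (auto simp: vanishes_below_def intro!: fls_times_nth_eq0)
qed

lemma vanishes_below_one_plus_mult:
  fixes f g :: "'a::comm_ring_1 fls"
  assumes "0 \<le> m" "vanishes_below m f" "vanishes_below m g"
  shows "vanishes_below m ((1 + f) * (1 + g) - 1)"
proof -
  have "vanishes_below m (f * g)"
    using vanishes_below_mult[OF assms(2,3)] assms(1) vanishes_below_mono by fastforce
  moreover have "(1 + f) * (1 + g) - 1 = f + g + f * g" by (simp add: algebra_simps)
  ultimately show ?thesis using assms by (simp add: vanishes_below_add)
qed

lemma vanishes_below_const2_monom2: "m \<le> a \<Longrightarrow> vanishes_below m (const2 c * monom2 (a, b))"
  by (simp add: vanishes_below_def monom2_nth)

text \<open>This makes every coefficient of the partial products eventually constant.\<close>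
definition qadic_factors :: "(nat \<Rightarrow> K) \<Rightarrow> bool" where
  "qadic_factors F \<longleftrightarrow> (\<forall>j\<ge>1. vanishes_below (int j) (F j - 1))"

abbreviation partial_prod :: "(nat \<Rightarrow> K) \<Rightarrow> nat \<Rightarrow> K" where
  "partial_prod F N \<equiv> \<Prod>j\<in>{1..N}. F j"

lemma partial_prod_Suc: "partial_prod F (Suc N) = partial_prod F N * F (Suc N)"
  by (simp add: prod.nat_ivl_Suc' mult.commute)

lemma partial_prod_minus_one:
  assumes "qadic_factors F"
  shows "vanishes_below 1 (partial_prod F N - 1)"
proof (induction N)
  case 0
  then show ?case by (simp add: vanishes_below_def)
next
  case (Suc N)
  have "vanishes_below (int (Suc N)) (F (Suc N) - 1)"
    using assms unfolding qadic_factors_def by (simp del: of_nat_Suc)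
  then have "vanishes_below 1 (F (Suc N) - 1)"
    by (rule vanishes_below_mono) simp
  moreover have "vanishes_below 0 (partial_prod F N)"
    using Suc.IH by (simp add: vanishes_below_def)
  ultimately have "vanishes_below 1 (partial_prod F N * (F (Suc N) - 1))"
    using vanishes_below_mult by fastforce
  moreover have "partial_prod F (Suc N) - 1
      = partial_prod F N * (F (Suc N) - 1) + (partial_prod F N - 1)"
    by (simp add: partial_prod_Suc algebra_simps)
  ultimately show ?case using Suc.IH vanishes_below_add by metis
qed

lemma partial_prod_vanishes_below_0:
  assumes "qadic_factors F"
  shows "vanishes_below 0 (partial_prod F N)"
  using partial_prod_minus_one[OF assms, of N] by (simp add: vanishes_below_def)

lemma partial_prod_stable:
  assumes "qadic_factors F" "M \<le> N"
  shows "vanishes_below (int M + 1) (partial_prod F N - partial_prod F M)"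
  using assms(2)
proof (induction N rule: dec_induct)
  case base
  then show ?case by (simp add: vanishes_below_def)
next
  case (step N)
  have "vanishes_below (int (Suc N)) (F (Suc N) - 1)"
    using assms(1) unfolding qadic_factors_def by (simp del: of_nat_Suc)
  then have "vanishes_below (int M + 1) (F (Suc N) - 1)"
    by (rule vanishes_below_mono) (use step.hyps in simp)
  then have "vanishes_below (0 + (int M + 1)) (partial_prod F N * (F (Suc N) - 1))"
    by (rule vanishes_below_mult[OF partial_prod_vanishes_below_0[OF assms(1)]])
  moreover have "partial_prod F (Suc N) - partial_prod F M
      = partial_prod F N * (F (Suc N) - 1) + (partial_prod F N - partial_prod F M)"
    by (simp add: partial_prod_Suc algebra_simps)
  ultimately show ?case using step.IH vanishes_below_add by (metis add_0)
qed

lemma is_infprod_unique: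
  assumes "is_infprod F P" "is_infprod F P'"
  shows "P = P'"
proof (rule fls_eqI)
  fix n
  have "\<forall>\<^sub>F N in sequentially. partial_prod F N $$ n = P $$ n \<and> partial_prod F N $$ n = P' $$ n"
    using assms unfolding is_infprod_def by (intro eventually_conj) auto
  then obtain N where "partial_prod F N $$ n = P $$ n \<and> partial_prod F N $$ n = P' $$ n"
    by (auto simp: eventually_sequentially)
  then show "P $$ n = P' $$ n" by metis
qed

lemma infprod_eqI: "is_infprod F P \<Longrightarrow> infprod F = P"
  unfolding infprod_def using is_infprod_unique by blast

lemma is_infprod_infprod:
  assumes F: "qadic_factors F"
  shows "is_infprod F (infprod F)"
proof -
  define P where "P = Abs_fls (\<lambda>n. if n < 0 then 0 else partial_prod F (nat n) $$ n)"
  have P_nth: "P $$ n = (if n < 0 then 0 else partial_prod F (nat n) $$ n)" for n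
    unfolding P_def by (rule nth_Abs_fls_lower_bound[of 0]) auto
  have agree: "partial_prod F N $$ n = P $$ n" if "nat n \<le> N" for n N
  proof (cases "n < 0")
    case True
    then show ?thesis
      using partial_prod_vanishes_below_0[OF F, of N] by (simp add: P_nth vanishes_below_def)
  next
    case False
    then have "(partial_prod F N - partial_prod F (nat n)) $$ n = 0"
      using partial_prod_stable[OF F that] by (simp add: vanishes_below_def)
    then show ?thesis using False by (simp add: P_nth)
  qed
  have "is_infprod F P"
    unfolding is_infprod_def eventually_sequentially
  proof
    fix n :: int
    show "\<exists>N0. \<forall>N\<ge>N0. partial_prod F N $$ n = P $$ n"
      using agree[of n] by blast
  qed
  then show ?thesis using infprod_eqI by simp
qed

lemma is_infprod_vanishes_below:
  assumes "is_infprod F P" "\<And>N. vanishes_below m (partial_prod F N)"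
  shows "vanishes_below m P"
  unfolding vanishes_below_def
proof (intro allI impI)
  fix k assume "k < m"
  obtain N where "partial_prod F N $$ k = P $$ k"
    using assms(1) unfolding is_infprod_def eventually_sequentially by blast
  with assms(2)[of N] \<open>k < m\<close> show "P $$ k = 0" by (simp add: vanishes_below_def)
qed

lemma fls_times_nth_vanishes_below_0:
  fixes f g :: "'a::comm_ring_1 fls"
  assumes "vanishes_below 0 f" "vanishes_below 0 g"
  shows "(f * g) $$ n = (\<Sum>i\<in>{0..n}. f $$ i * g $$ (n - i))"
proof (rule fls_times_nth_superset)
  fix i assume "f $$ i * g $$ (n - i) \<noteq> 0"
  then have "f $$ i \<noteq> 0" "g $$ (n - i) \<noteq> 0" by auto
  then show "i \<in> {0..n}" using assms unfolding vanishes_below_def by force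
qed simp

lemma is_infprod_mult:
  assumes F: "is_infprod F P" "\<And>N. vanishes_below 0 (partial_prod F N)"
    and G: "is_infprod G P'" "\<And>N. vanishes_below 0 (partial_prod G N)"
  shows "is_infprod (\<lambda>j. F j * G j) (P * P')"
  unfolding is_infprod_def
proof
  fix n :: int
  have "\<forall>\<^sub>F N in sequentially. \<forall>i\<in>{0..n}.
      partial_prod F N $$ i = P $$ i \<and> partial_prod G N $$ (n - i) = P' $$ (n - i)"
    using F(1) G(1) unfolding is_infprod_def by (intro eventually_ball_finite ballI eventually_conj) auto
  then show "\<forall>\<^sub>F N in sequentially. (\<Prod>j\<in>{1..N}. F j * G j) $$ n = (P * P') $$ n"
  proof (rule eventually_mono)
    fix N assume agree: "\<forall>i\<in>{0..n}.
      partial_prod F N $$ i = P $$ i \<and> partial_prod G N $$ (n - i) = P' $$ (n - i)"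
    have "(\<Prod>j\<in>{1..N}. F j * G j) $$ n = (partial_prod F N * partial_prod G N) $$ n"
      by (simp add: prod.distrib)
    also have "\<dots> = (\<Sum>i\<in>{0..n}. partial_prod F N $$ i * partial_prod G N $$ (n - i))"
      using F(2) G(2) by (rule fls_times_nth_vanishes_below_0)
    also have "\<dots> = (\<Sum>i\<in>{0..n}. P $$ i * P' $$ (n - i))"
      using agree by (intro sum.cong) auto
    also have "\<dots> = (P * P') $$ n"
      using is_infprod_vanishes_below[OF F] is_infprod_vanishes_below[OF G]
      by (simp add: fls_times_nth_vanishes_below_0)
    finally show "(\<Prod>j\<in>{1..N}. F j * G j) $$ n = (P * P') $$ n" .
  qed
qed

lemma infprod_mult:
  assumes "qadic_factors F" "qadic_factors G"
  shows "infprod F * infprod G = infprod (\<lambda>j. F j * G j)"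
  using is_infprod_mult[OF is_infprod_infprod[OF assms(1)] _ is_infprod_infprod[OF assms(2)]]
    partial_prod_vanishes_below_0[OF assms(1)] partial_prod_vanishes_below_0[OF assms(2)]
  by (simp add: infprod_eqI)

lemma initial_exp_infprod:
  assumes l: "l \<notin> \<rat>" and P: "is_infprod F P" and J: "initial_exp l (partial_prod F J) p"
    and tail: "\<And>j. j > J \<Longrightarrow> initially_one l (F j)"
  shows "initial_exp l P p"
proof -
  have stable: "initial_exp l (partial_prod F N) p \<and>
      coeff2 (partial_prod F N) p = coeff2 (partial_prod F J) p" if "J \<le> N" for N
    using that
  proof (induction N rule: dec_induct)
    case base
    then show ?case using J by simp
  next
    case (step N)
    have "initial_exp l (F (Suc N)) 0" "coeff2 (F (Suc N)) 0 = 1"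
      using tail[of "Suc N"] step.hyps by (auto simp: initially_one_def)
    then show ?case
      using initial_exp_mult[OF l _ \<open>initial_exp l (F (Suc N)) 0\<close>, of "partial_prod F N" p]
        step.IH by (simp add: partial_prod_Suc)
  qed
  have agree: "\<exists>N\<ge>J. coeff2 (partial_prod F N) y = coeff2 P y" for y
  proof -
    have "\<forall>\<^sub>F N in sequentially. partial_prod F N $$ fst y = P $$ fst y \<and> J \<le> N"
      using P unfolding is_infprod_def by (intro eventually_conj eventually_ge_at_top) auto
    then obtain N where "partial_prod F N $$ fst y = P $$ fst y" "J \<le> N"
      unfolding eventually_sequentially by blast
    then show ?thesis by (auto simp: coeff2_def)
  qed
  show ?thesis
    unfolding initial_exp_def
  proof safe
    assume "coeff2 P p = 0"
    then obtain N where "N \<ge> J" "coeff2 (partial_prod F N) p = 0"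
      using agree[of p] by auto
    with stable[of N] show False unfolding initial_exp_def by blast
  next
    fix y assume "coeff2 P y \<noteq> 0"
    then obtain N where "N \<ge> J" "coeff2 (partial_prod F N) y \<noteq> 0"
      using agree[of y] by auto
    with stable[of N] show "weight l p \<le> weight l y" unfolding initial_exp_def by blast
  qed
qed

section \<open>Series in \<open>Q\<close> alone\<close>

definition of_qseries :: "complex fls \<Rightarrow> K" where
  "of_qseries h = Abs_fls (\<lambda>n. fls_const (h $$ n))"

lemma of_qseries_nth: "of_qseries h $$ n = fls_const (h $$ n)"
  unfolding of_qseries_def by (rule nth_Abs_fls_lower_bound[of "fls_subdegree h"]) auto

lemma coeff2_of_qseries: "coeff2 (of_qseries h) (a, b) = (if b = 0 then h $$ a else 0)"
  by (simp add: coeff2_def of_qseries_nth)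

lemma of_qseries_0: "of_qseries 0 = 0"
  by (rule fls_eqI) (simp add: of_qseries_nth)

lemma of_qseries_1: "of_qseries 1 = 1"
  by (rule fls_eqI) (simp add: of_qseries_nth)

lemma of_qseries_const: "of_qseries (fls_const c) = const2 c"
  by (rule fls_eqI) (simp add: of_qseries_nth)

lemma of_qseries_X: "of_qseries fls_X = Qv"
  by (rule fls_eqI) (simp add: of_qseries_nth Qv_def)

lemma of_qseries_add: "of_qseries (a + b) = of_qseries a + of_qseries b"
  by (rule fls_eqI) (simp add: of_qseries_nth fls_plus_const)

lemma fls_const_sum: "fls_const (\<Sum>i\<in>A. f i) = (\<Sum>i\<in>A. fls_const (f i))"
  by (induction A rule: infinite_finite_induct) (simp_all add: fls_plus_const[symmetric])

lemma of_qseries_mult: "of_qseries (a * b) = of_qseries a * of_qseries b"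
proof (rule fls_eqI)
  fix n
  let ?A = "{fls_subdegree a..n - fls_subdegree b}"
  have "(of_qseries a * of_qseries b) $$ n = (\<Sum>i\<in>?A. of_qseries a $$ i * of_qseries b $$ (n - i))"
  proof (rule fls_times_nth_superset)
    fix i assume "of_qseries a $$ i * of_qseries b $$ (n - i) \<noteq> 0"
    then have "a $$ i \<noteq> 0" "b $$ (n - i) \<noteq> 0" by (auto simp: of_qseries_nth)
    then have "fls_subdegree a \<le> i" "fls_subdegree b \<le> n - i" by (auto intro: fls_subdegree_leI)
    then show "i \<in> ?A" by simp
  qed simp
  also have "\<dots> = fls_const (\<Sum>i\<in>?A. a $$ i * b $$ (n - i))"
    by (simp add: fls_const_sum of_qseries_nth)
  finally show "of_qseries (a * b) $$ n = (of_qseries a * of_qseries b) $$ n"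
    by (simp add: of_qseries_nth fls_times_nth(2))
qed

lemma of_qseries_power: "of_qseries (a ^ n) = of_qseries a ^ n"
  by (induction n) (simp_all add: of_qseries_1 of_qseries_mult)

lemma of_qseries_prod: "of_qseries (\<Prod>j\<in>S. f j) = (\<Prod>j\<in>S. of_qseries (f j))"
  by (induction S rule: infinite_finite_induct) (simp_all add: of_qseries_1 of_qseries_mult)

lemma of_qseries_inverse: "of_qseries (inverse a) = inverse (of_qseries a)"
proof (cases "a = 0")
  case True
  then show ?thesis by (simp add: of_qseries_0)
next
  case False
  then have "of_qseries a * of_qseries (inverse a) = 1"
    by (simp add: of_qseries_1 flip: of_qseries_mult)
  then show ?thesis by (metis inverse_unique)
qed

lemma of_qseries_powi: "of_qseries (a powi n) = of_qseries a powi n"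
  by (simp add: power_int_def of_qseries_power of_qseries_inverse)

lemma of_qseries_eqI:
  assumes "\<And>k. f $$ k = fls_const (f $$ k $$ 0)"
  shows "f = of_qseries (Abs_fls (\<lambda>k. f $$ k $$ 0))"
proof (rule fls_eqI)
  fix k
  have "Abs_fls (\<lambda>k. f $$ k $$ 0) $$ k = f $$ k $$ 0"
    by (rule nth_Abs_fls_lower_bound[of "fls_subdegree f"]) simp
  then show "f $$ k = of_qseries (Abs_fls (\<lambda>k. f $$ k $$ 0)) $$ k"
    using assms by (simp add: of_qseries_nth)
qed

lemma infprod_of_qseries:
  assumes "qadic_factors (\<lambda>j. of_qseries (g j))"
  obtains h where "infprod (\<lambda>j. of_qseries (g j)) = of_qseries h"
proof -
  let ?P = "infprod (\<lambda>j. of_qseries (g j))"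
  have "?P $$ k = fls_const (?P $$ k $$ 0)" for k
  proof -
    obtain N where "(\<Prod>j\<in>{1..N}. of_qseries (g j)) $$ k = ?P $$ k"
      using is_infprod_infprod[OF assms] unfolding is_infprod_def eventually_sequentially by blast
    then have "?P $$ k = fls_const ((\<Prod>j\<in>{1..N}. g j) $$ k)"
      by (simp add: of_qseries_nth flip: of_qseries_prod)
    then show ?thesis by simp
  qed
  then show ?thesis using of_qseries_eqI that by blast
qed

lemma initial_exp_of_qseries:
  assumes "h \<noteq> 0"
  shows "initial_exp l (of_qseries h) (fls_subdegree h, 0)"
  using assms by (auto simp: initial_exp_def coeff2_of_qseries weight_def
      intro: fls_subdegree_leI split: if_splits)

lemma initial_exp_powi_of_qseries:
  assumes l: "l \<notin> \<rat>" and h: "initial_exp l (of_qseries h) (a, 0)"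
  shows "initial_exp l (of_qseries h powi u) (u * a, 0)"
proof -
  have "h \<noteq> 0" using initial_exp_nonzero[OF h] by (auto simp: of_qseries_0)
  then have "a = fls_subdegree h"
    using initial_exp_unique[OF l h initial_exp_of_qseries] by simp
  then show ?thesis
    using initial_exp_of_qseries[of "h powi u" l] \<open>h \<noteq> 0\<close> by (simp add: of_qseries_powi)
qed

section \<open>The factors of \<open>\<phi>\<close>\<close>

text \<open>With \<open>c = -1\<close> these are \<open>\<eta>(\<tau>)\<close> and \<open>\<vartheta>(\<tau>, d z)\<close>; with \<open>c = 1\<close> they are
\<open>\<eta>(2\<tau>)/\<eta>(\<tau>)\<close> and \<open>\<vartheta>(2\<tau>, 2 d z)/\<vartheta>(\<tau>, d z)\<close>.\<close>
definition eta_sgn :: "complex \<Rightarrow> K" where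
  "eta_sgn c = Qv * infprod (\<lambda>n. 1 + const2 c * monom2 (24 * int n, 0))"

definition theta_factor :: "complex \<Rightarrow> nat \<Rightarrow> nat \<Rightarrow> K" where
  "theta_factor c d j = (1 + const2 c * monom2 (24 * int j, 24 * int d)) *
     (1 + const2 c * monom2 (24 * int j, - 24 * int d)) * (1 + const2 c * monom2 (24 * int j, 0))"

definition theta_sgn :: "complex \<Rightarrow> nat \<Rightarrow> K" where
  "theta_sgn c d = monom2 (3, 0) * (monom2 (0, 12 * int d) + const2 c * monom2 (0, - 12 * int d)) *
     infprod (theta_factor c d)"

lemma qadic_factors_eta: "qadic_factors (\<lambda>n. 1 + const2 c * monom2 (24 * int n, 0))"
  by (simp add: qadic_factors_def vanishes_below_const2_monom2)

lemma qadic_factors_theta_factor: "qadic_factors (theta_factor c d)"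
  unfolding qadic_factors_def
proof (intro allI impI)
  fix j :: nat
  let ?A = "const2 c * monom2 (24 * int j, 24 * int d)"
  let ?B = "const2 c * monom2 (24 * int j, - 24 * int d)"
  let ?C = "const2 c * monom2 (24 * int j, 0)"
  have small: "vanishes_below (int j) ?A" "vanishes_below (int j) ?B" "vanishes_below (int j) ?C"
    by (simp_all add: vanishes_below_const2_monom2)
  then have "vanishes_below (int j) ((1 + ?A) * (1 + ?B) - 1)"
    by (intro vanishes_below_one_plus_mult) simp_all
  then have "vanishes_below (int j) ((1 + ((1 + ?A) * (1 + ?B) - 1)) * (1 + ?C) - 1)"
    using small by (intro vanishes_below_one_plus_mult) simp_all
  then show "vanishes_below (int j) (theta_factor c d j - 1)"
    by (simp add: theta_factor_def)
qed

lemma initial_exp_eta_sgn: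
  assumes l: "l \<notin> \<rat>"
  shows "initial_exp l (eta_sgn c) (1, 0)"
proof -
  define F where "F = (\<lambda>n::nat. 1 + const2 c * monom2 (24 * int n, 0))"
  have "initial_exp l (infprod F) 0"
  proof (rule initial_exp_infprod[OF l is_infprod_infprod])
    show "qadic_factors F" unfolding F_def by (rule qadic_factors_eta)
    show "initial_exp l (partial_prod F 0) 0" by (simp add: initial_exp_one)
    fix j :: nat assume "j > 0"
    then have "weight l (24 * int j, 0) > 0" by (simp add: weight_def)
    then show "initially_one l (F j)"
      unfolding F_def by (rule initially_one_one_plus_monom2)
  qed
  then have "initial_exp l (monom2 (1, 0) * infprod F) ((1, 0) + 0)"
    by (rule initial_exp_mult[OF l initial_exp_monom2])
  moreover have "Qv = monom2 (1, 0)" using Qv_power[of 1] by simp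
  ultimately show ?thesis by (simp add: eta_sgn_def F_def)
qed

lemma eta_sgn_of_qseries:
  obtains h where "eta_sgn c = of_qseries h"
proof -
  define g where "g n = 1 + fls_const c * fls_X ^ (24 * n)" for n
  have factor: "1 + const2 c * monom2 (24 * int n, 0) = of_qseries (g n)" for n
    by (simp add: g_def of_qseries_add of_qseries_1 of_qseries_mult of_qseries_const
        of_qseries_power of_qseries_X Qv_power)
  obtain h where "infprod (\<lambda>n. of_qseries (g n)) = of_qseries h"
    using infprod_of_qseries qadic_factors_eta[of c] unfolding factor by metis
  then have "eta_sgn c = of_qseries (fls_X * h)"
    by (simp add: eta_sgn_def factor of_qseries_mult of_qseries_X)
  then show ?thesis by (rule that)
qed

lemma initial_exp_eta_sgn_powi:
  assumes l: "l \<notin> \<rat>"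
  shows "initial_exp l (eta_sgn c powi u) (u, 0)"
proof -
  obtain h where h: "eta_sgn c = of_qseries h" by (rule eta_sgn_of_qseries)
  show ?thesis
    using initial_exp_powi_of_qseries[OF l, of h 1 u] initial_exp_eta_sgn[OF l, of c]
    by (simp add: h)
qed

definition theta_factor_exp :: "real \<Rightarrow> nat \<Rightarrow> nat \<Rightarrow> int \<times> int" where
  "theta_factor_exp l d j = lower_end l 0 (24 * int j, 24 * int d) +
     lower_end l 0 (24 * int j, - 24 * int d) + lower_end l 0 (24 * int j, 0)"

text \<open>Beyond this index every factor of the product in \<open>\<vartheta>\<close> has positive-weight monomials only.\<close>
definition theta_cutoff :: "real \<Rightarrow> nat \<Rightarrow> nat" where
  "theta_cutoff l d = nat \<lceil>\<bar>l\<bar> * real d\<rceil>"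

definition theta_exp :: "real \<Rightarrow> nat \<Rightarrow> int \<times> int" where
  "theta_exp l d = (3, 0) + lower_end l (0, 12 * int d) (0, - 12 * int d) +
     (\<Sum>j\<in>{1..theta_cutoff l d}. theta_factor_exp l d j)"

lemma initial_exp_theta_factor:
  assumes l: "l \<notin> \<rat>" and "c \<noteq> 0" "j \<ge> 1"
  shows "initial_exp l (theta_factor c d j) (theta_factor_exp l d j)"
proof -
  have "(24 * int j, b) \<noteq> 0" for b using assms(3) by (simp add: zero_prod_def)
  then show ?thesis
    unfolding theta_factor_def theta_factor_exp_def
    by (intro initial_exp_mult[OF l] initial_exp_one_plus_monom2[OF l _ assms(2)])
qed

lemma initially_one_theta_factor:
  assumes l: "l \<notin> \<rat>" and j: "j > theta_cutoff l d"
  shows "initially_one l (theta_factor c d j)"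
proof -
  have "\<bar>l * real d\<bar> < real j" using j unfolding theta_cutoff_def by (simp add: abs_mult) linarith
  then have "weight l (24 * int j, 24 * int d) > 0" "weight l (24 * int j, - 24 * int d) > 0"
      "weight l (24 * int j, 0) > 0"
    by (auto simp: weight_def abs_less_iff)
  then show ?thesis
    unfolding theta_factor_def by (intro initially_one_mult[OF l] initially_one_one_plus_monom2)
qed

lemma initial_exp_theta_sgn:
  assumes l: "l \<notin> \<rat>" and c: "c \<noteq> 0" and d: "d \<ge> 1"
  shows "initial_exp l (theta_sgn c d) (theta_exp l d)"
proof -
  have "(0, 12 * int d) \<noteq> (0, - 12 * int d)" using d by simp
  then have binomial: "initial_exp l (monom2 (0, 12 * int d) + const2 c * monom2 (0, - 12 * int d))
      (lower_end l (0, 12 * int d) (0, - 12 * int d))"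
    by (rule initial_exp_binomial[OF l _ c])
  have "initial_exp l (partial_prod (theta_factor c d) (theta_cutoff l d))
      (\<Sum>j\<in>{1..theta_cutoff l d}. theta_factor_exp l d j)"
    by (rule initial_exp_prod[OF l]) (use initial_exp_theta_factor[OF l c] in auto)
  then have "initial_exp l (infprod (theta_factor c d))
      (\<Sum>j\<in>{1..theta_cutoff l d}. theta_factor_exp l d j)"
    by (rule initial_exp_infprod[OF l is_infprod_infprod[OF qadic_factors_theta_factor]])
      (use initially_one_theta_factor[OF l] in blast)
  then show ?thesis
    unfolding theta_sgn_def theta_exp_def
    by (intro initial_exp_mult[OF l] initial_exp_monom2 binomial)
qed

lemma eta_at_eq: "eta_at Qv Wv = eta_sgn (-1)"
  by (simp add: eta_at_def eta_sgn_def Qv_power)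

lemma theta_at_eq: "theta_at Qv Wv d = theta_sgn (-1) d"
proof -
  have "theta_factor (-1) d = (\<lambda>j. (1 - Qv ^ (24 * j) * Wv powi (24 * int d)) *
      (1 - Qv ^ (24 * j) * Wv powi (- 24 * int d)) * (1 - Qv ^ (24 * j)))"
    by (simp add: fun_eq_iff theta_factor_def Wv_powi Qv_power monom2_mult)
  then show ?thesis
    by (simp add: theta_at_def theta_sgn_def Wv_powi Qv_power monom2_mult)
qed

lemma one_minus_monom2_double: "(1 - monom2 m) * (1 + monom2 m) = 1 - monom2 (m + m)"
  by (simp add: algebra_simps flip: monom2_mult)

lemma eta_at_double: "eta_at (Qv ^ 2) (Wv ^ 2) = eta_sgn (-1) * eta_sgn 1"
proof -
  have "(\<lambda>n. (1 + const2 (-1) * monom2 (24 * int n, 0)) * (1 + const2 1 * monom2 (24 * int n, 0)))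
      = (\<lambda>n. 1 - (Qv ^ 2) ^ (24 * n))"
    using one_minus_monom2_double Qv2_power_Wv2_powi[of _ 0] by (simp add: fun_eq_iff)
  then have "infprod (\<lambda>n. 1 + const2 (-1) * monom2 (24 * int n, 0)) *
      infprod (\<lambda>n. 1 + const2 1 * monom2 (24 * int n, 0)) = infprod (\<lambda>n. 1 - (Qv ^ 2) ^ (24 * n))"
    by (simp only: infprod_mult[OF qadic_factors_eta qadic_factors_eta])
  then show ?thesis
    by (simp add: eta_at_def eta_sgn_def power2_eq_square mult_ac)
qed

lemma theta_at_double: "theta_at (Qv ^ 2) (Wv ^ 2) d = theta_sgn (-1) d * theta_sgn 1 d"
proof -
  have factors: "theta_factor (-1) d j * theta_factor 1 d j =
      (1 - (Qv ^ 2) ^ (24 * j) * (Wv ^ 2) powi (24 * int d)) *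
      (1 - (Qv ^ 2) ^ (24 * j) * (Wv ^ 2) powi (- 24 * int d)) * (1 - (Qv ^ 2) ^ (24 * j))" for j
  proof -
    let ?a = "(24 * int j, 24 * int d)" and ?b = "(24 * int j, - 24 * int d)"
      and ?e = "(24 * int j, 0 :: int)"
    have "theta_factor (-1) d j * theta_factor 1 d j =
        ((1 - monom2 ?a) * (1 + monom2 ?a)) * ((1 - monom2 ?b) * (1 + monom2 ?b)) *
        ((1 - monom2 ?e) * (1 + monom2 ?e))"
      by (simp add: theta_factor_def mult_ac)
    also have "\<dots> = (1 - monom2 (?a + ?a)) * (1 - monom2 (?b + ?b)) * (1 - monom2 (?e + ?e))"
      by (simp only: one_minus_monom2_double)
    finally show ?thesis
      using Qv2_power_Wv2_powi[of "24 * j" "24 * int d"] Qv2_power_Wv2_powi[of "24 * j" "- 24 * int d"]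
        Qv2_power_Wv2_powi[of "24 * j" 0]
      by simp
  qed
  have W: "(monom2 (0, 12 * int d) - monom2 (0, - 12 * int d)) *
      (monom2 (0, 12 * int d) + monom2 (0, - 12 * int d))
      = (Wv ^ 2) powi (12 * int d) - (Wv ^ 2) powi (- 12 * int d)"
    using Qv2_power_Wv2_powi[of 0 "12 * int d"] Qv2_power_Wv2_powi[of 0 "- 12 * int d"]
    by (simp add: algebra_simps monom2_mult)
  have Q: "monom2 (3, 0) * monom2 (3, 0) = (Qv ^ 2) ^ 3"
    using Qv2_power_Wv2_powi[of 3 0] by (simp add: monom2_mult)
  have I: "infprod (theta_factor (-1) d) * infprod (theta_factor 1 d) =
      infprod (\<lambda>j. theta_factor (-1) d j * theta_factor 1 d j)"
    by (rule infprod_mult[OF qadic_factors_theta_factor qadic_factors_theta_factor])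
  have "theta_sgn (-1) d * theta_sgn 1 d = (monom2 (3, 0) * monom2 (3, 0)) *
      ((monom2 (0, 12 * int d) - monom2 (0, - 12 * int d)) *
       (monom2 (0, 12 * int d) + monom2 (0, - 12 * int d))) *
      (infprod (theta_factor (-1) d) * infprod (theta_factor 1 d))"
    by (simp add: theta_sgn_def algebra_simps)
  also have "\<dots> = theta_at (Qv ^ 2) (Wv ^ 2) d"
    unfolding W Q I factors theta_at_def ..
  finally show ?thesis ..
qed

definition phi_sgn :: "complex \<Rightarrow> int \<Rightarrow> nat list \<Rightarrow> K" where
  "phi_sgn c u ds = eta_sgn c powi u * (\<Prod>d\<leftarrow>ds. theta_sgn c d)"

lemma prod_list_map_times:
  fixes f g :: "'b \<Rightarrow> 'a::comm_monoid_mult"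
  shows "(\<Prod>x\<leftarrow>xs. f x * g x) = (\<Prod>x\<leftarrow>xs. f x) * (\<Prod>x\<leftarrow>xs. g x)"
  by (induction xs) (simp_all add: mult_ac)

lemma phi_eq_phi_sgn: "phi u ds = phi_sgn (-1) u ds"
  by (simp add: phi_def phi_at_def phi_sgn_def eta_at_eq theta_at_eq)

lemma phi2_eq_phi_sgn: "phi2 u ds = phi_sgn (-1) u ds * phi_sgn 1 u ds"
  by (simp add: phi2_def phi_at_def phi_sgn_def eta_at_double theta_at_double
      prod_list_map_times power_int_mult_distrib mult_ac)

lemma initial_exp_phi_sgn:
  assumes l: "l \<notin> \<rat>" and "c \<noteq> 0" "\<forall>d\<in>set ds. d \<ge> 1"
  shows "initial_exp l (phi_sgn c u ds) ((u, 0) + (\<Sum>d\<leftarrow>ds. theta_exp l d))"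
  unfolding phi_sgn_def
  using assms by (intro initial_exp_mult[OF l] initial_exp_eta_sgn_powi initial_exp_prod_list
      ballI initial_exp_theta_sgn) auto

section \<open>Newton polygons\<close>

lemma ex_irrational: "\<exists>x::real. x \<notin> \<rat>"
  by (metis UNIV_eq_I countable_rat uncountable_UNIV_real)

lemma irrational_affine:
  fixes x q r :: real
  assumes "x \<notin> \<rat>" "q \<in> \<rat>" "r \<in> \<rat>" "r \<noteq> 0"
  shows "q + r * x \<notin> \<rat>"
proof
  assume "q + r * x \<in> \<rat>"
  then have "(q + r * x - q) / r \<in> \<rat>" using assms by (intro Rats_divide Rats_diff) auto
  with assms(1,4) show False by simp
qed

lemma convex_conv_A: "convex (conv_A S)"
proof (rule convexI)
  fix x y :: "real \<times> real" and u v :: real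
  assume "x \<in> conv_A S" "y \<in> conv_A S" and uv: "0 \<le> u" "0 \<le> v" "u + v = 1"
  then obtain x0 t y0 s where x0: "x = x0 + (t, 0)" "x0 \<in> convex hull S" "t \<ge> 0"
    and y0: "y = y0 + (s, 0)" "y0 \<in> convex hull S" "s \<ge> 0"
    unfolding conv_A_def by blast
  have "u *\<^sub>R x + v *\<^sub>R y = (u *\<^sub>R x0 + v *\<^sub>R y0) + (u * t + v * s, 0)"
    by (simp add: x0(1) y0(1) prod_eq_iff algebra_simps)
  moreover have "u *\<^sub>R x0 + v *\<^sub>R y0 \<in> convex hull S"
    using convexD[OF convex_convex_hull x0(2) y0(2) uv] .
  moreover have "u * t + v * s \<ge> 0" using uv x0(3) y0(3) by simp
  ultimately show "u *\<^sub>R x + v *\<^sub>R y \<in> conv_A S" unfolding conv_A_def by blast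
qed

lemma closure_conv_A_halfplane:
  assumes "\<forall>x\<in>S. c \<le> fst x + m * snd x" "z \<in> closure (conv_A S)"
  shows "c \<le> fst z + m * snd z"
proof -
  let ?H = "{x. inner (1, m) x \<ge> c}"
  have H: "x \<in> ?H \<longleftrightarrow> c \<le> fst x + m * snd x" for x :: "real \<times> real" by (cases x) simp
  then have "S \<subseteq> ?H" using assms(1) by auto
  then have "convex hull S \<subseteq> ?H" by (rule hull_minimal) (rule convex_halfspace_ge)
  then have "conv_A S \<subseteq> ?H" unfolding conv_A_def using H by fastforce
  then have "closure (conv_A S) \<subseteq> ?H" by (rule closure_minimal) (rule closed_halfspace_ge)
  then show ?thesis using assms(2) H by auto
qed

lemma ray_in_closure_conv_A:
  assumes "x \<in> S" "t \<ge> 0"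
  shows "x + (t, 0) \<in> closure (conv_A S)"
proof -
  have "x \<in> convex hull S" using assms(1) by (rule hull_inc)
  then have "x + (t, 0) \<in> conv_A S" unfolding conv_A_def using assms(2) by blast
  then show ?thesis using closure_subset by blast
qed

lemma separate_from_closure_conv_A:
  fixes S :: "(real \<times> real) set"
  assumes z: "z \<notin> closure (conv_A S)" and w0: "w0 \<in> S"
  obtains \<alpha> \<beta> b where "\<alpha> \<ge> 0" "\<forall>x\<in>S. b < \<alpha> * fst x + \<beta> * snd x" "\<alpha> * fst z + \<beta> * snd z < b"
proof -
  obtain a b where ab: "inner a z < b" "\<forall>x\<in>closure (conv_A S). b < inner a x"
    using separating_hyperplane_closed_point[OF convex_closure[OF convex_conv_A] closed_closure z]
    by blast
  obtain \<alpha> \<beta> where a: "a = (\<alpha>, \<beta>)" by (cases a)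
  have ray: "b < \<alpha> * fst x + \<beta> * snd x + \<alpha> * t" if "x \<in> S" "t \<ge> 0" for x t
  proof -
    have "b < inner a (x + (t, 0))" using ab(2) ray_in_closure_conv_A[OF that] by blast
    then show ?thesis by (cases x) (simp add: a algebra_simps)
  qed
  have "\<alpha> \<ge> 0"
  proof (rule ccontr)
    assume "\<not> \<alpha> \<ge> 0"
    then have "\<alpha> < 0" by simp
    moreover have "b < \<alpha> * fst w0 + \<beta> * snd w0" using ray[OF w0, of 0] by simp
    ultimately show False
      using ray[OF w0, of "(\<alpha> * fst w0 + \<beta> * snd w0 - b) / (- \<alpha>)"] by (simp add: field_simps)
  qed
  moreover have "\<forall>x\<in>S. b < \<alpha> * fst x + \<beta> * snd x" using ray[of _ 0] by simp
  moreover have "\<alpha> * fst z + \<beta> * snd z < b" using ab(1) by (cases z) (simp add: a)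
  ultimately show ?thesis by (rule that)
qed

text \<open>Since \<open>S\<close> is bounded on the left, a separating line may be tilted to be non-vertical.\<close>
lemma tilt_separating_line:
  fixes S :: "(real \<times> real) set"
  assumes "\<alpha> \<ge> 0" and S: "\<forall>x\<in>S. b < \<alpha> * fst x + \<beta> * snd x" and z: "\<alpha> * fst z + \<beta> * snd z < b"
    and A: "\<forall>x\<in>S. A \<le> fst x"
  obtains m c where "\<forall>x\<in>S. c \<le> fst x + m * snd x" "fst z + m * snd z < c"
proof -
  define \<epsilon> where "\<epsilon> = (b - (\<alpha> * fst z + \<beta> * snd z)) / (\<bar>fst z - A\<bar> + 1)"
  have \<epsilon>: "\<epsilon> > 0" using z by (simp add: \<epsilon>_def)
  have "\<epsilon> * (fst z - A) < \<epsilon> * (\<bar>fst z - A\<bar> + 1)"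
    using \<epsilon> by (intro mult_strict_left_mono) auto
  moreover have "\<epsilon> * (\<bar>fst z - A\<bar> + 1) = b - (\<alpha> * fst z + \<beta> * snd z)"
    by (simp add: \<epsilon>_def)
  ultimately have z_tilted: "(\<alpha> + \<epsilon>) * fst z + \<beta> * snd z < b + \<epsilon> * A"
    by (simp add: algebra_simps)
  have S_tilted: "b + \<epsilon> * A < (\<alpha> + \<epsilon>) * fst x + \<beta> * snd x" if "x \<in> S" for x
  proof -
    have "\<epsilon> * A \<le> \<epsilon> * fst x" using A that \<epsilon> by (simp add: mult_left_mono)
    moreover have "b < \<alpha> * fst x + \<beta> * snd x" using S that by blast
    ultimately show ?thesis by (simp add: algebra_simps)
  qed
  have pos: "\<alpha> + \<epsilon> > 0" using \<open>\<alpha> \<ge> 0\<close> \<epsilon> by simp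
  have normalize: "((\<alpha> + \<epsilon>) * fst y + \<beta> * snd y) / (\<alpha> + \<epsilon>) = fst y + \<beta> / (\<alpha> + \<epsilon>) * snd y"
    for y :: "real \<times> real"
    using pos by (simp add: field_simps)
  show ?thesis
  proof
    show "\<forall>x\<in>S. (b + \<epsilon> * A) / (\<alpha> + \<epsilon>) \<le> fst x + \<beta> / (\<alpha> + \<epsilon>) * snd x"
    proof
      fix x assume "x \<in> S"
      have "(b + \<epsilon> * A) / (\<alpha> + \<epsilon>) \<le> ((\<alpha> + \<epsilon>) * fst x + \<beta> * snd x) / (\<alpha> + \<epsilon>)"
        using S_tilted[OF \<open>x \<in> S\<close>] pos by (intro divide_right_mono) auto
      then show "(b + \<epsilon> * A) / (\<alpha> + \<epsilon>) \<le> fst x + \<beta> / (\<alpha> + \<epsilon>) * snd x"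
        by (simp only: normalize)
    qed
    show "fst z + \<beta> / (\<alpha> + \<epsilon>) * snd z < (b + \<epsilon> * A) / (\<alpha> + \<epsilon>)"
      using divide_strict_right_mono[OF z_tilted pos] by (simp only: normalize)
  qed
qed

text \<open>The lower boundary is concave in the slope, so a separating slope can be moved to an
irrational one.\<close>
lemma separate_with_irrational_slope:
  fixes S :: "(real \<times> real) set"
  assumes sep: "\<forall>x\<in>S. c \<le> fst x + m * snd x" "fst z + m * snd z < c"
    and bdd: "\<And>\<mu>. \<mu> \<notin> \<rat> \<Longrightarrow> \<exists>L. \<forall>x\<in>S. L \<le> fst x + \<mu> * snd x"
  obtains \<mu> c' where "\<mu> \<notin> \<rat>" "\<forall>x\<in>S. c' \<le> fst x + \<mu> * snd x" "fst z + \<mu> * snd z < c'"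
proof (cases "m \<in> \<rat>")
  case False
  with sep that show ?thesis by blast
next
  case True
  obtain i :: real where i: "i \<notin> \<rat>" using ex_irrational by blast
  have "m + 1 * i \<notin> \<rat>" by (rule irrational_affine[OF i True]) auto
  then obtain L where L: "\<forall>x\<in>S. L \<le> fst x + (m + i) * snd x" using bdd by auto
  define \<delta> where "\<delta> = c - (fst z + m * snd z)"
  define K where "K = \<bar>i * snd z + c - L\<bar> + 1"
  have "0 < min 1 (\<delta> / K)" using sep(2) by (simp add: \<delta>_def K_def)
  then obtain r where r: "r \<in> \<rat>" "0 < r" "r < min 1 (\<delta> / K)"
    using Rats_dense_in_real by blast
  show ?thesis
  proof
    show "m + r * i \<notin> \<rat>" using irrational_affine[OF i True r(1)] r(2) by simp
    show "\<forall>x\<in>S. (1 - r) * c + r * L \<le> fst x + (m + r * i) * snd x"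
    proof
      fix x assume "x \<in> S"
      then have "(1 - r) * c \<le> (1 - r) * (fst x + m * snd x)" "r * L \<le> r * (fst x + (m + i) * snd x)"
        using sep(1) L r by (auto intro: mult_left_mono)
      then show "(1 - r) * c + r * L \<le> fst x + (m + r * i) * snd x"
        by (simp add: algebra_simps)
    qed
    have "r * (i * snd z + c - L) < \<delta>"
    proof -
      have "r * (i * snd z + c - L) \<le> r * K" using r(2) by (intro mult_left_mono) (auto simp: K_def)
      also have "\<dots> < \<delta>" using r(3) by (simp add: K_def pos_less_divide_eq add_pos_nonneg)
      finally show ?thesis .
    qed
    then show "fst z + (m + r * i) * snd z < (1 - r) * c + r * L"
      by (simp add: \<delta>_def algebra_simps)
  qed
qed

lemma closure_conv_A_mono:
  assumes min: "\<And>\<mu>. \<mu> \<notin> \<rat> \<Longrightarrow> \<exists>w\<in>T. \<forall>x\<in>S \<union> T. fst w + \<mu> * snd w \<le> fst x + \<mu> * snd x"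
    and A: "\<forall>x\<in>T. A \<le> fst x"
  shows "closure (conv_A S) \<subseteq> closure (conv_A T)"
proof
  fix z assume z: "z \<in> closure (conv_A S)"
  show "z \<in> closure (conv_A T)"
  proof (rule ccontr)
    assume "z \<notin> closure (conv_A T)"
    moreover obtain w0 where "w0 \<in> T" using min ex_irrational by blast
    ultimately obtain \<alpha> \<beta> b where "\<alpha> \<ge> 0" "\<forall>x\<in>T. b < \<alpha> * fst x + \<beta> * snd x"
      "\<alpha> * fst z + \<beta> * snd z < b"
      by (rule separate_from_closure_conv_A)
    then obtain m c where "\<forall>x\<in>T. c \<le> fst x + m * snd x" "fst z + m * snd z < c"
      using A by (rule tilt_separating_line)
    moreover have "\<exists>L. \<forall>x\<in>T. L \<le> fst x + \<mu> * snd x" if "\<mu> \<notin> \<rat>" for \<mu>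
      using min[OF that] by blast
    ultimately obtain \<mu> c' where \<mu>: "\<mu> \<notin> \<rat>" and
      c': "\<forall>x\<in>T. c' \<le> fst x + \<mu> * snd x" "fst z + \<mu> * snd z < c'"
      by (rule separate_with_irrational_slope)
    obtain w where w: "w \<in> T" "\<forall>x\<in>S \<union> T. fst w + \<mu> * snd w \<le> fst x + \<mu> * snd x"
      using min[OF \<mu>] by blast
    have "fst w + \<mu> * snd w \<le> fst z + \<mu> * snd z"
      using w(2) z by (intro closure_conv_A_halfplane) auto
    with c' w(1) show False by fastforce
  qed
qed

lemma fsupp_fst_ge:
  assumes "x \<in> fsupp f"
  shows "real_of_int (fls_subdegree f) / 24 \<le> fst x"
proof -
  obtain a b where "x = (real_of_int a / 24, real_of_int b / 24)" "f $$ a $$ b \<noteq> 0"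
    using assms unfolding fsupp_def by blast
  moreover from this have "fls_subdegree f \<le> a" by (auto intro: fls_subdegree_leI)
  ultimately show ?thesis by simp
qed

lemma fsupp_ge_initial_exp:
  assumes "initial_exp l f p" "x \<in> fsupp f"
  shows "weight l p / 24 \<le> fst x + l * snd x"
proof -
  obtain a b where x: "x = (real_of_int a / 24, real_of_int b / 24)" "coeff2 f (a, b) \<noteq> 0"
    using assms(2) unfolding fsupp_def coeff2_def by auto
  then have "weight l p / 24 \<le> weight l (a, b) / 24"
    using assms(1) unfolding initial_exp_def by simp
  also have "\<dots> = fst x + l * snd x" by (simp add: x(1) weight_def field_simps)
  finally show ?thesis .
qed

lemma initial_exp_in_fsupp:
  assumes "initial_exp l f p"
  shows "\<exists>w\<in>fsupp f. fst w + l * snd w = weight l p / 24"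
proof -
  have "(real_of_int (fst p) / 24, real_of_int (snd p) / 24) \<in> fsupp f"
    using assms unfolding initial_exp_def coeff2_def fsupp_def by blast
  then show ?thesis by (force simp: weight_def field_simps)
qed

lemma nu_J_mono:
  assumes "\<And>l. l \<notin> \<rat> \<Longrightarrow> \<exists>p. initial_exp l f p \<and> initial_exp l g p"
  shows "nu_J f \<subseteq> nu_J g"
  unfolding nu_J_def
proof (rule closure_conv_A_mono)
  fix \<mu> :: real assume "\<mu> \<notin> \<rat>"
  then obtain p where p: "initial_exp \<mu> f p" "initial_exp \<mu> g p" using assms by blast
  obtain w where w: "w \<in> fsupp g" "fst w + \<mu> * snd w = weight \<mu> p / 24"
    using initial_exp_in_fsupp[OF p(2)] by blast
  have "weight \<mu> p / 24 \<le> fst x + \<mu> * snd x" if "x \<in> fsupp f \<union> fsupp g" for x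
    using that fsupp_ge_initial_exp[OF p(1)] fsupp_ge_initial_exp[OF p(2)] by blast
  with w show "\<exists>w\<in>fsupp g. \<forall>x\<in>fsupp f \<union> fsupp g. fst w + \<mu> * snd w \<le> fst x + \<mu> * snd x"
    by (metis (no_types, lifting))
next
  show "\<forall>x\<in>fsupp g. real_of_int (fls_subdegree g) / 24 \<le> fst x"
    using fsupp_fst_ge by blast
qed

lemma nu_J_eqI:
  assumes "\<And>l. l \<notin> \<rat> \<Longrightarrow> \<exists>p. initial_exp l f p \<and> initial_exp l g p"
  shows "nu_J f = nu_J g"
proof (rule antisym)
  show "nu_J f \<subseteq> nu_J g" by (rule nu_J_mono[OF assms])
  show "nu_J g \<subseteq> nu_J f" by (rule nu_J_mono) (use assms in blast)
qed

theorem lemma6p3: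
  fixes u :: int and ds :: "nat list"
  assumes "\<forall>d\<in>set ds. d \<ge> 1"
  shows "nu_J (phi2 u ds / phi u ds) = nu_J (phi u ds)"
proof -
  have same: "\<exists>p. initial_exp l (phi_sgn 1 u ds) p \<and> initial_exp l (phi u ds) p"
    if "l \<notin> \<rat>" for l
    unfolding phi_eq_phi_sgn
    by (intro exI[of _ "(u, 0) + (\<Sum>d\<leftarrow>ds. theta_exp l d)"] conjI
        initial_exp_phi_sgn[OF that _ assms]) simp_all
  obtain l :: real where "l \<notin> \<rat>" using ex_irrational by blast
  then have "phi u ds \<noteq> 0" using same initial_exp_nonzero by blast
  then have "phi2 u ds / phi u ds = phi_sgn 1 u ds"
    by (simp add: phi2_eq_phi_sgn phi_eq_phi_sgn)
  then show ?thesis using nu_J_eqI[OF same] by simp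
qed

end
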